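(* Fix $\varepsilon\in(0,\nu_* )$ and $\xi\in\mathbb R$, let $r^\varepsilon(\cdot,\xi)\in C^1([\varepsilon,\nu_*])$ be real-valued, and let $h^\varepsilon(\cdot,\xi)\in C^2([\varepsilon,\nu_*])$ be the unique solution of $$h^\varepsilon_{\nu\nu}+k'(\nu)^2\xi^2h^\varepsilon=r^\varepsilon\ \text{ on }[\varepsilon,\nu_*],\qquad h^\varepsilon(\varepsilon,\xi)=h^\varepsilon_\nu(\varepsilon,\xi)=0.$$ Then there exists $C>0$ independent of $(\varepsilon,\xi,r^\varepsilon)$ such that, for $\nu\in[\varepsilon,\nu_*]$ and $\xi\neq0$, $$h^\varepsilon_\nu(\nu,\xi)^2+k'(\nu)^2\xi^2h^\varepsilon(\nu,\xi)^2\le C\sum_{j=1}^3I_j^\varepsilon(\nu,\xi),$$ where $I_1^\varepsilon=k'(\nu)^{-2}\xi^{-2}r^\varepsilon(\nu,\xi)^2$, $I_2^\varepsilon=\xi^{-2}\int_\varepsilon^\nu k'(\tau)^{-2}r^\varepsilon(\tau,\xi)^2d\tau$, $I_3^\varepsilon=\xi^{-2}\int_\varepsilon^\nu\frac{r^\varepsilon_\nu(\tau,\xi)^2}{|k'(\tau)k''(\tau)|+k'(\tau)^2}d\tau$. In addition, for every $\xi\in\mathbb R$ and $\nu\in[\varepsilon,\nu_*]$, $$h^\varepsilon_\nu(\nu,\xi)^2+k'(\nu)^2\xi^2h^\varepsilon(\nu,\xi)^2\le C\,\nu\int_\varepsilon^\nu r^\varepsilon(\tau,\xi)^2d\tau,$$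 with $C>0$ independent of $(\varepsilon,\xi,r^\varepsilon)$.
   Context: Standing setting ($\gamma=3$): $\varrho(\nu)$ is the inverse of $\nu(\varrho)=\int_0^\varrho\frac{\tau^2}{1-\tau^2}d\tau$, $\nu_{\rm cr}=\nu(1/\sqrt2)$, and $k$ is defined on $[0,\nu_{\rm cr}]$ by $k(0)=0$, $k'(\nu)=\sqrt{1-2\varrho(\nu)^2}/\varrho(\nu)^2$. In particular $k'>0$ and $k''<0$ on $(0,\nu_{\rm cr})$. $\nu_*\in(0,\nu_{\rm cr})$ is fixed. *)

theory Defs
  imports "HOL-Analysis.Analysis"
begin

text \<open>gamma = 3 setting. nu(rho) = int_0^rho tau^2/(1-tau^2) dtau.\<close>
definition nu_of :: "real \<Rightarrow> real" where
  "nu_of \<rho> = integral {0..\<rho>} (\<lambda>\<tau>. \<tau>\<^sup>2 / (1 - \<tau>\<^sup>2))"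

definition nu_cr :: real where
  "nu_cr = nu_of (1 / sqrt 2)"

definition varrho :: "real \<Rightarrow> real" where
  "varrho \<nu> = (THE \<rho>. \<rho> \<in> {0..1 / sqrt 2} \<and> nu_of \<rho> = \<nu>)"

definition kp :: "real \<Rightarrow> real" where
  "kp \<nu> = sqrt (1 - 2 * (varrho \<nu>)\<^sup>2) / (varrho \<nu>)\<^sup>2"

definition kpp :: "real \<Rightarrow> real" where
  "kpp \<nu> = deriv kp \<nu>"

end

theory Submission
  imports Defs
begin

text \<open>Differentiating the energy \<open>E = h\<^sub>\<nu>\<^sup>2 + k'\<^sup>2 \<xi>\<^sup>2 h\<^sup>2\<close> along the equation gives
  \<open>E' = 2 h\<^sub>\<nu> r + 2 k' k'' \<xi>\<^sup>2 h\<^sup>2\<close>, and the second term is nonpositive since \<open>k' > 0\<close> and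
  \<open>k'' \<le> 0\<close>. Bounding \<open>2 h\<^sub>\<nu> r \<le> E / \<nu> + \<nu> r\<^sup>2\<close> and applying Gronwall's inequality to
  \<open>\<integral>E\<close> on \<open>[\<epsilon>, \<nu>]\<close> gives the second estimate. For the first one integrates the derivative of
  \<open>E - 2 h r\<close> instead, in which \<open>r\<^sub>\<nu>\<close> replaces \<open>h\<^sub>\<nu>\<close>; this yields
  \<open>E \<le> 2 \<integral>E + 2 I\<^sub>3 + 4 I\<^sub>1\<close>, and Gronwall's inequality finishes the proof. Only positivity
  and monotonicity of \<open>k'\<close> (and continuity of \<open>k''\<close>) are used; they follow from the closed form
  \<open>k'' = -2 (1 - \<rho>\<^sup>2)\<^sup>2 / (\<rho>\<^sup>5 \<surd>(1 - 2 \<rho>\<^sup>2))\<close>, obtained by differentiating through the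
  inverse function \<open>\<rho>(\<nu>)\<close>.\<close>

lemma continuous_on_nu_density:
  assumes "b < 1"
  shows "continuous_on {0..b} (\<lambda>\<tau>::real. \<tau>\<^sup>2 / (1 - \<tau>\<^sup>2))"
proof (intro continuous_intros ballI)
  fix \<tau> :: real assume "\<tau> \<in> {0..b}"
  then have "\<tau>\<^sup>2 < 1" using assms by (simp add: abs_square_less_1)
  then show "1 - \<tau>\<^sup>2 \<noteq> 0" by simp
qed

lemma nu_of_has_vector_derivative:
  assumes "b < 1" "x \<in> {0..b}"
  shows "(nu_of has_vector_derivative x\<^sup>2 / (1 - x\<^sup>2)) (at x within {0..b})"
  unfolding nu_of_def[abs_def]
  using integral_has_vector_derivative[OF continuous_on_nu_density[OF assms(1)] assms(2)] by simp

lemma continuous_on_nu_of: "b < 1 \<Longrightarrow> continuous_on {0..b} nu_of"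
  using nu_of_has_vector_derivative continuous_on_eq_continuous_within
    has_vector_derivative_continuous by blast

lemma nu_of_has_real_derivative:
  assumes "0 < x" "x < 1"
  shows "(nu_of has_real_derivative x\<^sup>2 / (1 - x\<^sup>2)) (at x)"
proof -
  define b where "b = (1 + x) / 2"
  have "b < 1" "x \<in> {0<..<b}" using assms by (auto simp: b_def)
  then have "(nu_of has_vector_derivative x\<^sup>2 / (1 - x\<^sup>2)) (at x within {0..b})"
    by (intro nu_of_has_vector_derivative) auto
  moreover have "at x within {0..b} = at x"
    using \<open>x \<in> {0<..<b}\<close> by (intro at_within_Icc_at) auto
  ultimately show ?thesis
    by (simp only: has_real_derivative_iff_has_vector_derivative)
qed

lemma strict_mono_on_nu_of: "strict_mono_on {0..<1} nu_of"
proof (rule strict_mono_onI)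
  fix a b :: real assume ab: "a \<in> {0..<1}" "b \<in> {0..<1}" "a < b"
  show "nu_of a < nu_of b"
  proof (rule DERIV_pos_imp_increasing_open[OF \<open>a < b\<close>])
    fix x assume "a < x" "x < b"
    then have "0 < x" "x < 1" using ab by auto
    then show "\<exists>y. DERIV nu_of x :> y \<and> 0 < y"
      by (intro exI[of _ "x\<^sup>2 / (1 - x\<^sup>2)"] conjI nu_of_has_real_derivative)
        (auto simp: abs_square_less_1)
  next
    show "continuous_on {a..b} nu_of"
    proof (rule continuous_on_subset[OF continuous_on_nu_of])
      show "b < 1" "{a..b} \<subseteq> {0..b}" using ab by auto
    qed
  qed
qed

definition rho_cr :: real where "rho_cr = 1 / sqrt 2"

lemma rho_cr_pos: "0 < rho_cr"
  by (simp add: rho_cr_def)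

lemma rho_cr_less_1: "rho_cr < 1"
  by (simp add: rho_cr_def divide_less_eq)

lemma rho_cr_square: "rho_cr\<^sup>2 = 1 / 2"
  by (simp add: rho_cr_def power_divide)

lemma inj_on_nu_of: "inj_on nu_of {0..rho_cr}"
proof (rule inj_on_subset[OF strict_mono_on_imp_inj_on[OF strict_mono_on_nu_of]])
  show "{0..rho_cr} \<subseteq> {0..<1}"
    using rho_cr_less_1 by auto
qed

lemma varrho_nu_of:
  assumes "\<rho> \<in> {0..rho_cr}"
  shows "varrho (nu_of \<rho>) = \<rho>"
  unfolding varrho_def rho_cr_def[symmetric]
proof (rule the_equality)
  fix \<rho>' assume "\<rho>' \<in> {0..rho_cr} \<and> nu_of \<rho>' = nu_of \<rho>"
  then show "\<rho>' = \<rho>" using inj_onD[OF inj_on_nu_of] assms by blast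
qed (use assms in simp)

lemma nu_of_0: "nu_of 0 = 0"
  by (simp add: nu_of_def)

lemma varrho_in_range:
  assumes "\<nu> \<in> {0..nu_cr}"
  shows "varrho \<nu> \<in> {0..rho_cr}" and "nu_of (varrho \<nu>) = \<nu>"
proof -
  have "continuous_on {0..rho_cr} nu_of"
    using continuous_on_nu_of rho_cr_less_1 by blast
  then obtain \<rho> where \<rho>: "\<rho> \<in> {0..rho_cr}" "nu_of \<rho> = \<nu>"
    using IVT'[of nu_of 0 \<nu> rho_cr] assms rho_cr_pos by (auto simp: nu_of_0 nu_cr_def rho_cr_def)
  then show "varrho \<nu> \<in> {0..rho_cr}" "nu_of (varrho \<nu>) = \<nu>"
    using varrho_nu_of by auto
qed

lemma varrho_bounds:
  assumes "\<nu> \<in> {0<..<nu_cr}"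
  shows "0 < varrho \<nu>" and "varrho \<nu> < rho_cr"
proof -
  have "varrho \<nu> \<noteq> 0" and "varrho \<nu> \<noteq> rho_cr"
    using varrho_in_range(2)[of \<nu>] assms by (auto simp: nu_of_0 nu_cr_def rho_cr_def)
  then show "0 < varrho \<nu>" and "varrho \<nu> < rho_cr"
    using varrho_in_range(1)[of \<nu>] assms by auto
qed

lemma isCont_varrho:
  assumes "\<nu> \<in> {0<..<nu_cr}"
  shows "isCont varrho \<nu>"
proof -
  define \<rho> where "\<rho> = varrho \<nu>"
  have \<rho>: "0 < \<rho>" "\<rho> < rho_cr" using varrho_bounds[OF assms] by (auto simp: \<rho>_def)
  define d where "d = min \<rho> (rho_cr - \<rho>) / 2"
  have "isCont varrho (nu_of \<rho>)"
  proof (rule isCont_inverse_function[where f = nu_of and x = \<rho> and d = d])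
    show "0 < d" using \<rho> by (simp add: d_def)
    fix z assume "\<bar>z - \<rho>\<bar> \<le> d"
    then have z: "0 < z" "z < rho_cr" using \<rho> by (auto simp: d_def abs_real_def min_def split: if_splits)
    then show "varrho (nu_of z) = z" by (simp add: varrho_nu_of)
    show "isCont nu_of z"
      by (rule DERIV_isCont[OF nu_of_has_real_derivative]) (use z rho_cr_less_1 in auto)
  qed
  then show ?thesis using varrho_in_range(2)[of \<nu>] assms by (simp add: \<rho>_def)
qed

lemma varrho_has_real_derivative:
  assumes "\<nu> \<in> {0<..<nu_cr}"
  shows "(varrho has_real_derivative (1 - (varrho \<nu>)\<^sup>2) / (varrho \<nu>)\<^sup>2) (at \<nu>)"
proof -
  define \<rho> where "\<rho> = varrho \<nu>"
  have \<rho>: "0 < \<rho>" "\<rho> < 1" using varrho_bounds[OF assms] rho_cr_less_1 by (auto simp: \<rho>_def)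
  then have "\<rho>\<^sup>2 < 1" by (simp add: abs_square_less_1)
  have "(varrho has_real_derivative inverse (\<rho>\<^sup>2 / (1 - \<rho>\<^sup>2))) (at \<nu>)"
  proof (rule DERIV_inverse_function[where f = nu_of and a = 0 and b = nu_cr])
    show "(nu_of has_real_derivative \<rho>\<^sup>2 / (1 - \<rho>\<^sup>2)) (at (varrho \<nu>))"
      using \<rho> nu_of_has_real_derivative by (simp add: \<rho>_def)
    show "\<rho>\<^sup>2 / (1 - \<rho>\<^sup>2) \<noteq> 0" using \<rho> \<open>\<rho>\<^sup>2 < 1\<close> by simp
    show "0 < \<nu>" "\<nu> < nu_cr" using assms by auto
    show "nu_of (varrho y) = y" if "0 < y" "y < nu_cr" for y
      using varrho_in_range(2) that by simp
    show "isCont varrho \<nu>" by (rule isCont_varrho[OF assms])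
  qed
  then show ?thesis by (simp add: \<rho>_def)
qed

lemma varrho_square_less_half:
  assumes "\<nu> \<in> {0<..<nu_cr}"
  shows "2 * (varrho \<nu>)\<^sup>2 < 1"
proof -
  have "(varrho \<nu>)\<^sup>2 < rho_cr\<^sup>2"
    using varrho_bounds[OF assms] by (simp add: power_strict_mono)
  then show ?thesis by (simp add: rho_cr_square)
qed

lemma kp_pos: "\<nu> \<in> {0<..<nu_cr} \<Longrightarrow> 0 < kp \<nu>"
  using varrho_bounds(1)[of \<nu>] varrho_square_less_half[of \<nu>] by (simp add: kp_def)

lemma kp_has_real_derivative:
  assumes "\<nu> \<in> {0<..<nu_cr}"
  defines "\<rho> \<equiv> varrho \<nu>"
  shows "(kp has_real_derivative - 2 * (1 - \<rho>\<^sup>2)\<^sup>2 / (\<rho> ^ 5 * sqrt (1 - 2 * \<rho>\<^sup>2))) (at \<nu>)"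
proof -
  have \<rho>: "0 < \<rho>" and pos: "0 < 1 - 2 * \<rho>\<^sup>2"
    using varrho_bounds[OF assms(1)] varrho_square_less_half[OF assms(1)] by (auto simp: \<rho>_def)
  have "((\<lambda>x. sqrt (1 - 2 * x\<^sup>2) / x\<^sup>2) has_real_derivative
      - 2 * (1 - \<rho>\<^sup>2) / (\<rho> ^ 3 * sqrt (1 - 2 * \<rho>\<^sup>2))) (at \<rho>)"
    using \<rho> pos by (auto intro!: derivative_eq_intros simp: field_simps power2_eq_square power3_eq_cube)
  from DERIV_chain2[OF this[unfolded \<rho>_def] varrho_has_real_derivative[OF assms(1)]]
  have "(kp has_real_derivative - 2 * (1 - \<rho>\<^sup>2) / (\<rho> ^ 3 * sqrt (1 - 2 * \<rho>\<^sup>2))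
      * ((1 - \<rho>\<^sup>2) / \<rho>\<^sup>2)) (at \<nu>)"
    unfolding kp_def[abs_def] \<rho>_def .
  moreover have "- 2 * (1 - \<rho>\<^sup>2) / (\<rho> ^ 3 * sqrt (1 - 2 * \<rho>\<^sup>2)) * ((1 - \<rho>\<^sup>2) / \<rho>\<^sup>2)
      = - 2 * (1 - \<rho>\<^sup>2)\<^sup>2 / (\<rho> ^ 5 * sqrt (1 - 2 * \<rho>\<^sup>2))"
    using \<rho> pos by (simp add: field_simps power2_eq_square eval_nat_numeral)
  ultimately show ?thesis by (simp only:)
qed

lemma kpp_eq:
  assumes "\<nu> \<in> {0<..<nu_cr}"
  shows "kpp \<nu> = - 2 * (1 - (varrho \<nu>)\<^sup>2)\<^sup>2 / (varrho \<nu> ^ 5 * sqrt (1 - 2 * (varrho \<nu>)\<^sup>2))"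
  unfolding kpp_def by (rule DERIV_imp_deriv[OF kp_has_real_derivative[OF assms]])

lemma kpp_neg: "\<nu> \<in> {0<..<nu_cr} \<Longrightarrow> kpp \<nu> < 0"
  using varrho_bounds(1)[of \<nu>] varrho_square_less_half[of \<nu>]
  by (simp add: kpp_eq divide_neg_pos abs_square_less_1)

lemma continuous_on_kpp: "continuous_on {0<..<nu_cr} kpp"
proof -
  have "isCont (\<lambda>\<nu>. - 2 * (1 - (varrho \<nu>)\<^sup>2)\<^sup>2 / (varrho \<nu> ^ 5 * sqrt (1 - 2 * (varrho \<nu>)\<^sup>2))) \<nu>"
    if "\<nu> \<in> {0<..<nu_cr}" for \<nu>
    using isCont_varrho[OF that] varrho_bounds[OF that] varrho_square_less_half[OF that]
    by (intro continuous_intros) auto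
  then show ?thesis
    using continuous_at_imp_continuous_on continuous_on_cong kpp_eq by (smt (verit))
qed

lemma diff_le_integral_of_deriv_le:
  fixes f f' g :: "real \<Rightarrow> real"
  assumes "a \<le> b" and "{a..b} \<subseteq> S"
    and f_deriv: "\<And>t. t \<in> {a..b} \<Longrightarrow> (f has_real_derivative f' t) (at t within S)"
    and le: "\<And>t. t \<in> {a..b} \<Longrightarrow> f' t \<le> g t"
    and "g integrable_on {a..b}"
  shows "f b - f a \<le> integral {a..b} g"
proof -
  have "(f' has_integral f b - f a) {a..b}"
  proof (rule fundamental_theorem_of_calculus[OF \<open>a \<le> b\<close>])
    show "(f has_vector_derivative f' t) (at t within {a..b})" if "t \<in> {a..b}" for t
      using DERIV_subset[OF f_deriv[OF that] \<open>{a..b} \<subseteq> S\<close>]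
      by (simp add: has_real_derivative_iff_has_vector_derivative)
  qed
  then show ?thesis
    using has_integral_le[OF _ integrable_integral[OF \<open>g integrable_on {a..b}\<close>] le] by blast
qed

lemma gronwall_integral:
  fixes u \<phi> :: "real \<Rightarrow> real"
  assumes "a \<le> b" and "0 \<le> c"
    and u_cont: "continuous_on {a..b} u" and \<phi>_cont: "continuous_on {a..b} \<phi>"
    and \<phi>_nonneg: "\<And>s. s \<in> {a..b} \<Longrightarrow> 0 \<le> \<phi> s"
    and u_le: "\<And>s. s \<in> {a..b} \<Longrightarrow> u s \<le> \<phi> s + c * integral {a..s} u"
  shows "u b \<le> \<phi> b + c * exp (c * (b - a)) * integral {a..b} \<phi>"
proof -
  define U where "U s = integral {a..s} u" for s
  define P where "P s = exp (- c * (s - a)) * U s - integral {a..s} \<phi>" for s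
  have U_deriv: "(U has_real_derivative u s) (at s within {a..b})" if "s \<in> {a..b}" for s
    unfolding U_def has_real_derivative_iff_has_vector_derivative
    using integral_has_vector_derivative[OF u_cont that] .
  have \<phi>_deriv: "((\<lambda>s. integral {a..s} \<phi>) has_real_derivative \<phi> s) (at s within {a..b})"
    if "s \<in> {a..b}" for s
    unfolding has_real_derivative_iff_has_vector_derivative
    using integral_has_vector_derivative[OF \<phi>_cont that] .
  have P_deriv: "(P has_real_derivative
      exp (- c * (s - a)) * (u s - c * U s) - \<phi> s) (at s within {a..b})" if "s \<in> {a..b}" for s
    unfolding P_def using U_deriv[OF that] \<phi>_deriv[OF that]
    by (auto intro!: derivative_eq_intros simp: algebra_simps)
  have "exp (- c * (s - a)) * (u s - c * U s) - \<phi> s \<le> 0" if s: "s \<in> {a..b}" for s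
  proof -
    have "u s - c * U s \<le> \<phi> s" using u_le[OF s] by (simp add: U_def)
    moreover have "exp (- c * (s - a)) \<le> 1" using s \<open>0 \<le> c\<close> by simp
    ultimately have "exp (- c * (s - a)) * (u s - c * U s) \<le> \<phi> s"
      using \<phi>_nonneg[OF s]
      by (smt (verit, best) exp_gt_zero mult_left_le_one_le mult_nonneg_nonpos)
    then show ?thesis by simp
  qed
  then have "P b - P a \<le> integral {a..b} (\<lambda>_. 0)"
    using \<open>a \<le> b\<close> P_deriv by (intro diff_le_integral_of_deriv_le) auto
  then have "exp (- c * (b - a)) * U b \<le> integral {a..b} \<phi>"
    by (simp add: P_def U_def)
  then have "exp (c * (b - a)) * (exp (- c * (b - a)) * U b)
      \<le> exp (c * (b - a)) * integral {a..b} \<phi>"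
    by (rule mult_left_mono) simp
  then have "U b \<le> exp (c * (b - a)) * integral {a..b} \<phi>"
    by (simp add: mult.assoc[symmetric] exp_add[symmetric])
  then have "c * U b \<le> c * exp (c * (b - a)) * integral {a..b} \<phi>"
    using \<open>0 \<le> c\<close> by (simp add: mult_left_mono mult.assoc)
  then show ?thesis
    using u_le[of b] \<open>a \<le> b\<close> by (simp add: U_def)
qed

lemma two_mult_le_weighted_squares:
  fixes x y c :: real
  assumes "0 < c"
  shows "2 * x * y \<le> c * x\<^sup>2 + y\<^sup>2 / c"
proof -
  have "0 \<le> (c * x - y)\<^sup>2 / c" using assms by simp
  also have "\<dots> = c * x\<^sup>2 + y\<^sup>2 / c - 2 * x * y"
    using assms by (simp add: field_simps power2_eq_square)
  finally show ?thesis by simp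
qed

lemma integrable_on_initial_segment:
  fixes f :: "real \<Rightarrow> real"
  assumes "continuous_on {a..b} f" and "s \<le> b"
  shows "f integrable_on {a..s}"
  using assms by (intro integrable_on_subinterval[OF integrable_continuous_real]) auto

locale forced_oscillator =
  fixes a b \<xi> :: real and K K' r h h' h'' :: "real \<Rightarrow> real"
  assumes K_deriv: "\<And>t. t \<in> {a..b} \<Longrightarrow> (K has_real_derivative K' t) (at t within {a..b})"
    and K_pos: "\<And>t. t \<in> {a..b} \<Longrightarrow> 0 < K t"
    and K'_nonpos: "\<And>t. t \<in> {a..b} \<Longrightarrow> K' t \<le> 0"
    and r_cont: "continuous_on {a..b} r"
    and h_deriv: "\<And>t. t \<in> {a..b} \<Longrightarrow> (h has_real_derivative h' t) (at t within {a..b})"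
    and h'_deriv: "\<And>t. t \<in> {a..b} \<Longrightarrow> (h' has_real_derivative h'' t) (at t within {a..b})"
    and ode: "\<And>t. t \<in> {a..b} \<Longrightarrow> h'' t + (K t)\<^sup>2 * \<xi>\<^sup>2 * h t = r t"
    and h_a: "h a = 0" and h'_a: "h' a = 0"
begin

definition energy :: "real \<Rightarrow> real" where
  "energy t = (h' t)\<^sup>2 + (K t)\<^sup>2 * \<xi>\<^sup>2 * (h t)\<^sup>2"

lemma energy_a: "energy a = 0"
  by (simp add: energy_def h_a h'_a)

lemma continuous_on_energy: "continuous_on {a..b} energy"
  unfolding energy_def[abs_def]
  using DERIV_continuous_on[OF h_deriv] DERIV_continuous_on[OF h'_deriv]
    DERIV_continuous_on[OF K_deriv]
  by (intro continuous_intros)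

lemma energy_has_real_derivative:
  assumes "t \<in> {a..b}"
  shows "(energy has_real_derivative 2 * h' t * r t + 2 * K t * K' t * \<xi>\<^sup>2 * (h t)\<^sup>2)
    (at t within {a..b})"
proof -
  have h'': "h'' t = r t - (K t)\<^sup>2 * \<xi>\<^sup>2 * h t" using ode[OF assms] by simp
  show ?thesis
    unfolding energy_def[abs_def]
    using h_deriv[OF assms] h'_deriv[OF assms] K_deriv[OF assms]
    by (auto intro!: derivative_eq_intros simp: h'' power2_eq_square algebra_simps)
qed

lemma K_K'_nonpos: "t \<in> {a..b} \<Longrightarrow> K t * K' t \<le> 0"
  using K_pos K'_nonpos by (meson less_imp_le mult_nonneg_nonpos)

lemma energy_deriv_le:
  assumes "t \<in> {a..b}" and "0 < \<nu>"
  shows "2 * h' t * r t + 2 * K t * K' t * \<xi>\<^sup>2 * (h t)\<^sup>2 \<le> energy t / \<nu> + \<nu> * (r t)\<^sup>2"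
proof -
  have "2 * h' t * r t \<le> (h' t)\<^sup>2 / \<nu> + \<nu> * (r t)\<^sup>2"
    using two_mult_le_weighted_squares[of "1 / \<nu>" "h' t" "r t"] \<open>0 < \<nu>\<close>
    by (simp add: mult.commute)
  also have "\<dots> \<le> energy t / \<nu> + \<nu> * (r t)\<^sup>2"
    using \<open>0 < \<nu>\<close> by (simp add: energy_def divide_right_mono)
  moreover have "2 * K t * K' t * \<xi>\<^sup>2 * (h t)\<^sup>2 \<le> 0"
    using K_K'_nonpos[OF \<open>t \<in> {a..b}\<close>] by (simp add: mult_nonpos_nonneg)
  ultimately show ?thesis by linarith
qed

lemma energy_le_integral_energy_L2:
  assumes "0 < \<nu>" and "\<nu> \<le> b" and s: "s \<in> {a..\<nu>}"
  shows "energy s \<le> \<nu> * integral {a..\<nu>} (\<lambda>\<tau>. (r \<tau>)\<^sup>2) + integral {a..s} energy / \<nu>"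
proof -
  have r2_cont: "continuous_on {a..b} (\<lambda>\<tau>. (r \<tau>)\<^sup>2)"
    using r_cont by (intro continuous_intros)
  have E_int: "energy integrable_on {a..s}" and r2_int: "(\<lambda>\<tau>. (r \<tau>)\<^sup>2) integrable_on {a..s}"
    using s \<open>\<nu> \<le> b\<close> continuous_on_energy r2_cont by (auto intro: integrable_on_initial_segment)
  have "energy s - energy a \<le> integral {a..s} (\<lambda>t. energy t / \<nu> + \<nu> * (r t)\<^sup>2)"
  proof (rule diff_le_integral_of_deriv_le[where S = "{a..b}"
      and f' = "\<lambda>t. 2 * h' t * r t + 2 * K t * K' t * \<xi>\<^sup>2 * (h t)\<^sup>2"])
    show "(\<lambda>t. energy t / \<nu> + \<nu> * (r t)\<^sup>2) integrable_on {a..s}"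
      using E_int r2_int by (intro integrable_add integrable_on_divide integrable_on_mult_right)
  qed (use s \<open>\<nu> \<le> b\<close> \<open>0 < \<nu>\<close> energy_has_real_derivative energy_deriv_le in auto)
  also have "\<dots> = integral {a..s} energy / \<nu> + \<nu> * integral {a..s} (\<lambda>\<tau>. (r \<tau>)\<^sup>2)"
    using E_int r2_int by (simp add: integral_add integrable_on_divide integrable_on_mult_right)
  also have "integral {a..s} (\<lambda>\<tau>. (r \<tau>)\<^sup>2) \<le> integral {a..\<nu>} (\<lambda>\<tau>. (r \<tau>)\<^sup>2)"
    using s \<open>\<nu> \<le> b\<close> r2_cont
    by (intro integral_subset_le integrable_on_initial_segment[OF r2_cont]) auto
  finally show ?thesis using \<open>0 < \<nu>\<close> by (simp add: energy_a)
qed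

lemma energy_le_L2:
  assumes "0 < a" and \<nu>: "\<nu> \<in> {a..b}" and C: "exp 1 + 1 \<le> C"
  shows "energy \<nu> \<le> C * \<nu> * integral {a..\<nu>} (\<lambda>\<tau>. (r \<tau>)\<^sup>2)"
proof -
  define R where "R = integral {a..\<nu>} (\<lambda>\<tau>. (r \<tau>)\<^sup>2)"
  have "0 < \<nu>" using assms by auto
  have "0 \<le> R"
    unfolding R_def using \<nu> r_cont
    by (intro integral_nonneg integrable_on_initial_segment[of a b] continuous_intros) auto
  have "energy \<nu> \<le> \<nu> * R + 1 / \<nu> * exp (1 / \<nu> * (\<nu> - a)) * integral {a..\<nu>} (\<lambda>_. \<nu> * R)"
    using \<nu> \<open>0 < \<nu>\<close> \<open>0 \<le> R\<close> energy_le_integral_energy_L2[of \<nu>]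
    by (intro gronwall_integral continuous_on_subset[OF continuous_on_energy]) (auto simp: R_def)
  also have "\<dots> = \<nu> * R + exp (1 - a / \<nu>) * ((\<nu> - a) * R)"
    using \<nu> \<open>0 < \<nu>\<close> by (simp add: field_simps)
  also have "\<dots> \<le> \<nu> * R + exp 1 * (\<nu> * R)"
    using \<open>0 < a\<close> \<open>0 < \<nu>\<close> \<open>0 \<le> R\<close> \<nu>
    by (intro add_left_mono mult_mono mult_right_mono) auto
  also have "\<dots> = (exp 1 + 1) * (\<nu> * R)"
    by (simp add: algebra_simps)
  also have "\<dots> \<le> C * (\<nu> * R)"
    using C \<open>0 < \<nu>\<close> \<open>0 \<le> R\<close> by (intro mult_right_mono) auto
  finally show ?thesis by (simp add: R_def mult.assoc)
qed

end

locale forced_oscillator_C1 = forced_oscillator +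
  fixes r' :: "real \<Rightarrow> real"
  assumes K'_cont: "continuous_on {a..b} K'"
    and r_deriv: "\<And>t. t \<in> {a..b} \<Longrightarrow> (r has_real_derivative r' t) (at t within {a..b})"
    and r'_cont: "continuous_on {a..b} r'"
begin

text \<open>In the notation of the paper, \<open>r_weighted \<nu>\<close> is \<open>I\<^sub>1\<close> and the integrand of \<open>I\<^sub>2\<close>, and
  \<open>r'_weighted\<close> is the integrand of \<open>I\<^sub>3\<close>.\<close>

definition r_weighted :: "real \<Rightarrow> real" where
  "r_weighted t = (r t)\<^sup>2 / ((K t)\<^sup>2 * \<xi>\<^sup>2)"

definition r'_weighted :: "real \<Rightarrow> real" where
  "r'_weighted t = (r' t)\<^sup>2 / ((\<bar>K t * K' t\<bar> + (K t)\<^sup>2) * \<xi>\<^sup>2)"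

lemma r_weighted_nonneg: "0 \<le> r_weighted t"
  by (simp add: r_weighted_def)

lemma r'_weighted_nonneg: "0 \<le> r'_weighted t"
  by (simp add: r'_weighted_def)

lemma continuous_on_r_weighted:
  assumes "\<xi> \<noteq> 0"
  shows "continuous_on {a..b} r_weighted"
  unfolding r_weighted_def[abs_def] using r_cont DERIV_continuous_on[OF K_deriv] K_pos assms
  by (intro continuous_intros) (auto simp: less_imp_neq[symmetric] atLeastAtMost_iff)

lemma continuous_on_r'_weighted:
  assumes "\<xi> \<noteq> 0"
  shows "continuous_on {a..b} r'_weighted"
proof -
  have "\<bar>K \<tau> * K' \<tau>\<bar> + (K \<tau>)\<^sup>2 \<noteq> 0" if "\<tau> \<in> {a..b}" for \<tau>
    using K_pos[OF that] by (metis abs_ge_zero add_nonneg_pos less_irrefl zero_less_power)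
  then show ?thesis
    unfolding r'_weighted_def[abs_def] using r'_cont K'_cont DERIV_continuous_on[OF K_deriv] assms
    by (intro continuous_intros) auto
qed

text \<open>Subtracting \<open>2 h r\<close> from the energy trades \<open>h' r\<close> for \<open>h r'\<close> in the derivative; the
  remaining term \<open>K K' \<xi>\<^sup>2 h\<^sup>2\<close> is absorbed by the weight \<open>\<bar>K K'\<bar> + K\<^sup>2\<close>.\<close>

lemma corrected_energy_deriv_le:
  assumes t: "t \<in> {a..b}" and "\<xi> \<noteq> 0"
  shows "2 * K t * K' t * \<xi>\<^sup>2 * (h t)\<^sup>2 - 2 * h t * r' t \<le> energy t + r'_weighted t"
proof -
  define w where "w = (\<bar>K t * K' t\<bar> + (K t)\<^sup>2) * \<xi>\<^sup>2"
  have "0 < w" using K_pos[OF t] \<open>\<xi> \<noteq> 0\<close> by (simp add: w_def add_nonneg_pos)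
  have "- 2 * h t * r' t \<le> w * (h t)\<^sup>2 + (r' t)\<^sup>2 / w"
    using two_mult_le_weighted_squares[OF \<open>0 < w\<close>, of "h t" "- r' t"] by simp
  moreover have "2 * K t * K' t * \<xi>\<^sup>2 * (h t)\<^sup>2 + w * (h t)\<^sup>2
      = ((K t)\<^sup>2 + K t * K' t) * \<xi>\<^sup>2 * (h t)\<^sup>2"
    using K_K'_nonpos[OF t] by (simp add: w_def algebra_simps)
  moreover have "((K t)\<^sup>2 + K t * K' t) * \<xi>\<^sup>2 * (h t)\<^sup>2 \<le> energy t"
    using K_K'_nonpos[OF t] unfolding energy_def
    by (intro add_increasing mult_right_mono) auto
  ultimately show ?thesis by (simp add: w_def r'_weighted_def)
qed

lemma energy_le_integral_energy:
  assumes s: "s \<in> {a..b}" and "\<xi> \<noteq> 0"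
  shows "energy s \<le> 2 * integral {a..s} energy + 2 * integral {a..s} r'_weighted + 4 * r_weighted s"
proof -
  have E_int: "energy integrable_on {a..s}" and q_int: "r'_weighted integrable_on {a..s}"
    using s continuous_on_energy continuous_on_r'_weighted[OF \<open>\<xi> \<noteq> 0\<close>]
    by (auto intro: integrable_on_initial_segment)
  have "(energy s - 2 * h s * r s) - (energy a - 2 * h a * r a)
      \<le> integral {a..s} (\<lambda>t. energy t + r'_weighted t)"
  proof (rule diff_le_integral_of_deriv_le[where S = "{a..b}"])
    show "((\<lambda>t. energy t - 2 * h t * r t) has_real_derivative
        2 * K t * K' t * \<xi>\<^sup>2 * (h t)\<^sup>2 - 2 * h t * r' t) (at t within {a..b})"
      if "t \<in> {a..s}" for t
      using that s energy_has_real_derivative[of t] h_deriv[of t] r_deriv[of t]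
      by (auto intro!: derivative_eq_intros simp: algebra_simps)
    show "(\<lambda>t. energy t + r'_weighted t) integrable_on {a..s}"
      using E_int q_int by (rule integrable_add)
  qed (use s \<open>\<xi> \<noteq> 0\<close> corrected_energy_deriv_le in auto)
  then have "energy s - 2 * h s * r s \<le> integral {a..s} energy + integral {a..s} r'_weighted"
    using E_int q_int by (simp add: energy_a h_a integral_add)
  moreover have "2 * h s * r s \<le> energy s / 2 + 2 * r_weighted s"
  proof -
    define c where "c = (K s)\<^sup>2 * \<xi>\<^sup>2 / 2"
    have "0 < c" using K_pos[OF s] \<open>\<xi> \<noteq> 0\<close> by (simp add: c_def)
    have "2 * h s * r s \<le> c * (h s)\<^sup>2 + (r s)\<^sup>2 / c"
      by (rule two_mult_le_weighted_squares[OF \<open>0 < c\<close>])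
    also have "\<dots> \<le> energy s / 2 + 2 * r_weighted s"
      by (simp add: c_def energy_def r_weighted_def field_simps)
    finally show ?thesis .
  qed
  ultimately show ?thesis by linarith
qed

lemma energy_le_integrals_weighted:
  assumes \<nu>: "\<nu> \<in> {a..b}" and "\<xi> \<noteq> 0"
  defines "P \<equiv> integral {a..\<nu>} r_weighted" and "Q \<equiv> integral {a..\<nu>} r'_weighted"
  shows "energy \<nu> \<le> 4 * r_weighted \<nu> + 2 * Q + 2 * exp (2 * (\<nu> - a)) * (4 * P + 2 * Q * (\<nu> - a))"
proof -
  have p_int: "r_weighted integrable_on {a..s}" and q_int: "r'_weighted integrable_on {a..s}"
    if "s \<in> {a..\<nu>}" for s
    using that \<nu> continuous_on_r_weighted[OF \<open>\<xi> \<noteq> 0\<close>] continuous_on_r'_weighted[OF \<open>\<xi> \<noteq> 0\<close>]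
    by (auto intro: integrable_on_initial_segment)
  have "0 \<le> Q"
    unfolding Q_def using q_int \<nu> r'_weighted_nonneg by (auto intro: integral_nonneg)
  have "energy \<nu> \<le> (4 * r_weighted \<nu> + 2 * Q)
      + 2 * exp (2 * (\<nu> - a)) * integral {a..\<nu>} (\<lambda>s. 4 * r_weighted s + 2 * Q)"
  proof (rule gronwall_integral)
    show "energy s \<le> 4 * r_weighted s + 2 * Q + 2 * integral {a..s} energy" if s: "s \<in> {a..\<nu>}" for s
    proof -
      have "integral {a..s} r'_weighted \<le> Q"
        unfolding Q_def using s q_int \<nu> r'_weighted_nonneg by (intro integral_subset_le) auto
      then show ?thesis
        using energy_le_integral_energy[of s] s \<nu> \<open>\<xi> \<noteq> 0\<close> by auto
    qed
  qed (use \<nu> \<open>0 \<le> Q\<close> r_weighted_nonneg continuous_on_r_weighted[OF \<open>\<xi> \<noteq> 0\<close>] in \<open>auto intro!: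
      continuous_intros continuous_on_subset[OF continuous_on_energy] intro: continuous_on_subset\<close>)
  also have "integral {a..\<nu>} (\<lambda>s. 4 * r_weighted s + 2 * Q) = 4 * P + 2 * Q * (\<nu> - a)"
    using p_int[of \<nu>] \<nu> by (subst integral_add) (auto intro: integrable_on_mult_right simp: P_def)
  finally show ?thesis .
qed

lemma energy_le_weighted:
  assumes \<nu>: "\<nu> \<in> {a..b}" and "\<xi> \<noteq> 0"
    and C: "4 + 8 * (1 + (b - a)) * exp (2 * (b - a)) \<le> C"
  shows "energy \<nu> \<le> C *
    ((r \<nu>)\<^sup>2 / ((K \<nu>)\<^sup>2 * \<xi>\<^sup>2)
     + integral {a..\<nu>} (\<lambda>\<tau>. (r \<tau>)\<^sup>2 / (K \<tau>)\<^sup>2) / \<xi>\<^sup>2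
     + integral {a..\<nu>} (\<lambda>\<tau>. (r' \<tau>)\<^sup>2 / (\<bar>K \<tau> * K' \<tau>\<bar> + (K \<tau>)\<^sup>2)) / \<xi>\<^sup>2)"
proof -
  define p where "p = r_weighted \<nu>"
  define P where "P = integral {a..\<nu>} r_weighted"
  define Q where "Q = integral {a..\<nu>} r'_weighted"
  define X where "X = exp (2 * (b - a))"
  have "0 \<le> p" by (simp add: p_def r_weighted_nonneg)
  have "0 \<le> P" "0 \<le> Q"
    unfolding P_def Q_def using \<nu> r_weighted_nonneg r'_weighted_nonneg
      continuous_on_r_weighted[OF \<open>\<xi> \<noteq> 0\<close>] continuous_on_r'_weighted[OF \<open>\<xi> \<noteq> 0\<close>]
    by (auto intro!: integral_nonneg integrable_on_initial_segment)
  have e: "exp (2 * (\<nu> - a)) \<le> X" "0 \<le> X" using \<nu> by (simp_all add: X_def)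
  have "exp (2 * (\<nu> - a)) * P \<le> X * P"
    using e(1) \<open>0 \<le> P\<close> by (rule mult_right_mono)
  moreover have "exp (2 * (\<nu> - a)) * (Q * (\<nu> - a)) \<le> X * (Q * (b - a))"
    using e \<open>0 \<le> Q\<close> \<nu> by (intro mult_mono mult_left_mono) auto
  moreover have "0 \<le> X * p" "0 \<le> X * (b - a) * p" "0 \<le> X * (b - a) * P"
    "0 \<le> X * (b - a) * Q" "0 \<le> X * Q"
    using e \<open>0 \<le> p\<close> \<open>0 \<le> P\<close> \<open>0 \<le> Q\<close> \<nu> by auto
  ultimately have "energy \<nu> \<le> (4 + 8 * (1 + (b - a)) * X) * (p + P + Q)"
    using energy_le_integrals_weighted[OF \<nu> \<open>\<xi> \<noteq> 0\<close>] \<open>0 \<le> p\<close> \<open>0 \<le> P\<close> \<open>0 \<le> Q\<close>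
    unfolding p_def[symmetric] P_def[symmetric] Q_def[symmetric] by (simp add: algebra_simps)
  also have "\<dots> \<le> C * (p + P + Q)"
    using C \<open>0 \<le> p\<close> \<open>0 \<le> P\<close> \<open>0 \<le> Q\<close> by (intro mult_right_mono) (auto simp: X_def)
  also have "P = integral {a..\<nu>} (\<lambda>\<tau>. (r \<tau>)\<^sup>2 / (K \<tau>)\<^sup>2) / \<xi>\<^sup>2"
    by (simp only: P_def r_weighted_def[abs_def] divide_divide_eq_left[symmetric] integral_divide)
  also have "Q = integral {a..\<nu>} (\<lambda>\<tau>. (r' \<tau>)\<^sup>2 / (\<bar>K \<tau> * K' \<tau>\<bar> + (K \<tau>)\<^sup>2)) / \<xi>\<^sup>2"
    by (simp only: Q_def r'_weighted_def[abs_def] divide_divide_eq_left[symmetric] integral_divide)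
  finally show ?thesis by (simp add: p_def r_weighted_def)
qed

end

lemma forced_oscillator_C1_kp:
  assumes "0 < \<epsilon>" "nu_star < nu_cr"
    and "\<And>t. t \<in> {\<epsilon>..nu_star} \<Longrightarrow> (r has_real_derivative r' t) (at t within {\<epsilon>..nu_star})"
    and "continuous_on {\<epsilon>..nu_star} r'"
    and "\<And>t. t \<in> {\<epsilon>..nu_star} \<Longrightarrow> (h has_real_derivative h' t) (at t within {\<epsilon>..nu_star})"
    and "\<And>t. t \<in> {\<epsilon>..nu_star} \<Longrightarrow> (h' has_real_derivative h'' t) (at t within {\<epsilon>..nu_star})"
    and "\<And>t. t \<in> {\<epsilon>..nu_star} \<Longrightarrow> h'' t + (kp t)\<^sup>2 * \<xi>\<^sup>2 * h t = r t"
    and "h \<epsilon> = 0" "h' \<epsilon> = 0"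
  shows "forced_oscillator_C1 \<epsilon> nu_star \<xi> kp kpp r h h' h'' r'"
proof -
  have sub: "{\<epsilon>..nu_star} \<subseteq> {0<..<nu_cr}" using assms(1,2) by auto
  show ?thesis
  proof (unfold_locales)
    show "(kp has_real_derivative kpp t) (at t within {\<epsilon>..nu_star})" if "t \<in> {\<epsilon>..nu_star}" for t
    proof -
      have t: "t \<in> {0<..<nu_cr}" using that sub by auto
      show ?thesis
        using kp_has_real_derivative[OF t, folded kpp_eq[OF t]] by (rule has_field_derivative_at_within)
    qed
    show "continuous_on {\<epsilon>..nu_star} kpp"
      using continuous_on_kpp sub by (rule continuous_on_subset)
    show "continuous_on {\<epsilon>..nu_star} r"
      using assms(3) by (rule DERIV_continuous_on)
  qed (use assms sub kp_pos kpp_neg in \<open>auto intro: less_imp_le\<close>)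
qed

theorem lemma4p7:
  fixes nu_star :: real
  assumes "0 < nu_star" and "nu_star < nu_cr"
  shows "\<exists>C>0. \<forall>\<epsilon> \<xi> (r::real \<Rightarrow> real) r' h h' h''.
     0 < \<epsilon> \<and> \<epsilon> < nu_star
     \<and> (\<forall>t\<in>{\<epsilon>..nu_star}. (r has_real_derivative r' t) (at t within {\<epsilon>..nu_star}))
     \<and> continuous_on {\<epsilon>..nu_star} r'
     \<and> (\<forall>t\<in>{\<epsilon>..nu_star}. (h has_real_derivative h' t) (at t within {\<epsilon>..nu_star}))
     \<and> (\<forall>t\<in>{\<epsilon>..nu_star}. (h' has_real_derivative h'' t) (at t within {\<epsilon>..nu_star}))
     \<and> continuous_on {\<epsilon>..nu_star} h''
     \<and> (\<forall>t\<in>{\<epsilon>..nu_star}. h'' t + (kp t)\<^sup>2 * \<xi>\<^sup>2 * h t = r t)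
     \<and> h \<epsilon> = 0 \<and> h' \<epsilon> = 0
     \<longrightarrow>
     (\<forall>\<nu>\<in>{\<epsilon>..nu_star}. \<xi> \<noteq> 0 \<longrightarrow>
        (h' \<nu>)\<^sup>2 + (kp \<nu>)\<^sup>2 * \<xi>\<^sup>2 * (h \<nu>)\<^sup>2
        \<le> C * ( (r \<nu>)\<^sup>2 / ((kp \<nu>)\<^sup>2 * \<xi>\<^sup>2)
               + integral {\<epsilon>..\<nu>} (\<lambda>\<tau>. (r \<tau>)\<^sup>2 / (kp \<tau>)\<^sup>2) / \<xi>\<^sup>2
               + integral {\<epsilon>..\<nu>} (\<lambda>\<tau>. (r' \<tau>)\<^sup>2
                   / (\<bar>kp \<tau> * kpp \<tau>\<bar> + (kp \<tau>)\<^sup>2)) / \<xi>\<^sup>2))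
     \<and> (\<forall>\<nu>\<in>{\<epsilon>..nu_star}.
        (h' \<nu>)\<^sup>2 + (kp \<nu>)\<^sup>2 * \<xi>\<^sup>2 * (h \<nu>)\<^sup>2
        \<le> C * \<nu> * integral {\<epsilon>..\<nu>} (\<lambda>\<tau>. (r \<tau>)\<^sup>2))"
proof -
  define C where "C = 4 + 8 * (1 + nu_star) * exp (2 * nu_star)"
  have "1 * 1 \<le> (1 + nu_star) * exp (2 * nu_star)"
    using assms(1) by (intro mult_mono) auto
  then have "12 \<le> C" unfolding C_def by linarith
  then have "0 < C" "exp 1 + 1 \<le> C" using exp_le by auto
  show ?thesis
  proof (intro exI[of _ C] conjI[OF \<open>0 < C\<close>] allI impI, elim conjE, goal_cases)
    case (1 \<epsilon> \<xi> r r' h h' h'')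
    then interpret forced_oscillator_C1 \<epsilon> nu_star \<xi> kp kpp r h h' h'' r'
      using assms by (intro forced_oscillator_C1_kp) auto
    have "4 + 8 * (1 + (nu_star - \<epsilon>)) * exp (2 * (nu_star - \<epsilon>)) \<le> C"
      using 1 by (simp add: C_def mult_mono)
    then show ?case
      using energy_le_weighted energy_le_L2 \<open>0 < \<epsilon>\<close> \<open>exp 1 + 1 \<le> C\<close>
      by (simp add: energy_def)
  qed
qed

end
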